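(* Let $(S,\preceq)$ be a cc sponge and let $P$ be a nonempty left-bounded subset of $S$. Then $P$ has a meet, i.e. $M(P)\neq\emptyset$.
   Context: An orientation on $S$ is a reflexive, antisymmetric binary relation $\preceq$. $P\subseteq S$ is left-bounded if some $s\in S$ has $s\preceq p$ for all $p\in P$, right-bounded if some $s$ has $p\preceq s$ for all $p\in P$. $M(P)$ is the set of $x\in S$ with $x\preceq p$ for all $p\in P$ and $y\preceq x$ for every $y\in S$ with $y\preceq p$ for all $p\in P$ (the meet); $J(P)$ (the join) is defined dually. $(S,\preceq)$ is a cc sponge if $J(P)\ne\emptyset$ for every nonempty right-bounded $P\subseteq S$. *)

theory Defs
  imports Main
begin

definition orientation :: "'a set \<Rightarrow> ('a \<Rightarrow> 'a \<Rightarrow> bool) \<Rightarrow> bool" where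
  "orientation S le \<longleftrightarrow> (\<forall>x\<in>S. le x x) \<and> (\<forall>x\<in>S. \<forall>y\<in>S. le x y \<and> le y x \<longrightarrow> x = y)"

definition left_bounded :: "'a set \<Rightarrow> ('a \<Rightarrow> 'a \<Rightarrow> bool) \<Rightarrow> 'a set \<Rightarrow> bool" where
  "left_bounded S le P \<longleftrightarrow> (\<exists>s\<in>S. \<forall>p\<in>P. le s p)"

definition right_bounded :: "'a set \<Rightarrow> ('a \<Rightarrow> 'a \<Rightarrow> bool) \<Rightarrow> 'a set \<Rightarrow> bool" where
  "right_bounded S le P \<longleftrightarrow> (\<exists>s\<in>S. \<forall>p\<in>P. le p s)"

definition meet :: "'a set \<Rightarrow> ('a \<Rightarrow> 'a \<Rightarrow> bool) \<Rightarrow> 'a set \<Rightarrow> 'a set" where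
  "meet S le P = {x\<in>S. (\<forall>p\<in>P. le x p) \<and> (\<forall>y\<in>S. (\<forall>p\<in>P. le y p) \<longrightarrow> le y x)}"

definition join :: "'a set \<Rightarrow> ('a \<Rightarrow> 'a \<Rightarrow> bool) \<Rightarrow> 'a set \<Rightarrow> 'a set" where
  "join S le P = {x\<in>S. (\<forall>p\<in>P. le p x) \<and> (\<forall>y\<in>S. (\<forall>p\<in>P. le p y) \<longrightarrow> le x y)}"

definition cc_sponge :: "'a set \<Rightarrow> ('a \<Rightarrow> 'a \<Rightarrow> bool) \<Rightarrow> bool" where
  "cc_sponge S le \<longleftrightarrow> orientation S le \<and>
     (\<forall>P. P \<subseteq> S \<and> P \<noteq> {} \<and> right_bounded S le P \<longrightarrow> join S le P \<noteq> {})"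

end

theory Submission
  imports Defs
begin

(* The meet of P is the join of its set of lower bounds; that set is nonempty because P is
   left-bounded, and right-bounded by any element of P. *)

definition lower_bounds :: "'a set \<Rightarrow> ('a \<Rightarrow> 'a \<Rightarrow> bool) \<Rightarrow> 'a set \<Rightarrow> 'a set" where
  "lower_bounds S le P = {y\<in>S. \<forall>p\<in>P. le y p}"

lemma join_lower_bounds_subset_meet:
  assumes "P \<subseteq> S"
  shows "join S le (lower_bounds S le P) \<subseteq> meet S le P"
  using assms unfolding join_def meet_def lower_bounds_def by blast

lemma lower_bounds_nonempty_iff_left_bounded:
  "lower_bounds S le P \<noteq> {} \<longleftrightarrow> left_bounded S le P"
  unfolding lower_bounds_def left_bounded_def by blast

lemma right_bounded_lower_bounds:
  assumes "P \<subseteq> S" and "P \<noteq> {}"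
  shows "right_bounded S le (lower_bounds S le P)"
  using assms unfolding right_bounded_def lower_bounds_def by blast

theorem mainTheorem6:
  fixes S :: "'a set" and le :: "'a \<Rightarrow> 'a \<Rightarrow> bool" and P :: "'a set"
  assumes "cc_sponge S le"
    and "P \<subseteq> S" and "P \<noteq> {}"
    and "left_bounded S le P"
  shows "meet S le P \<noteq> {}"
proof -
  have "lower_bounds S le P \<subseteq> S"
    unfolding lower_bounds_def by blast
  moreover have "lower_bounds S le P \<noteq> {}"
    using assms(4) lower_bounds_nonempty_iff_left_bounded by blast
  moreover have "right_bounded S le (lower_bounds S le P)"
    using assms(2,3) by (rule right_bounded_lower_bounds)
  ultimately have "join S le (lower_bounds S le P) \<noteq> {}"
    using assms(1) unfolding cc_sponge_def by blast
  then show ?thesis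
    using join_lower_bounds_subset_meet[OF assms(2)] by blast
qed

end
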